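(* Let $A,B,H,K$ be events with $H\ne\emptyset$, $K\ne\emptyset$. For each coherent prevision assessment $(x,y,z)$ on $\{A|H,B|K,(A|H)\wedge(B|K)\}$ there exists $\lambda\in[0,+\infty]$ such that, as random quantities, $(A|H)\wedge(B|K)=T_\lambda(A|H,B|K)$.
   Context: Events are identified with their indicators; $\bar E$ is the negation of $E$. For $H\ne\emptyset$ the conditional event $E|H$ is true if $EH$ is true, false if $\bar EH$ is true, void if $\bar H$ is true; with $P(E|H)=x$ it is identified with the random quantity $EH+x\bar H$, and a conditional random quantity $X|H$ with prevision $\mu$ with $XH+\mu\bar H$. Coherence (de Finetti): an assessment $(\mu_1,\dots,\mu_m)$ on $\{X_1|H_1,\dots,X_m|H_m\}$ is coherent iff for all real stakes $s_i$ the gain $G=\sum_is_iH_i(X_i-\mu_i)$, restricted to $H_1\vee\dots\vee H_m$, satisfies $\min G\le0\le\max G$. Conjunction of two conditional events: given $P(A|H)=x$, $P(B|K)=y$ and $z=\mathbb P[(AHBK+x\bar HBK+y\bar KAH)|(H\vee K)]$, the conjunction is $(A|H)\wedge(B|K)=AHBK+x\bar HBK+y\bar KAH+z\bar H\bar K$, i.e. it equals $1$ if $AHBK$ is true, $0$ if $\bar AH\vee\bar BK$ is true, $x$ if $\bar HBK$ is true, $y$ if $AH\bar K$ is true, $z$ if $\bar H\bar K$ is true; its prevision is $z$. Frank t-norms $T_\lambda:[0,1]^2\to[0,1]$, $\lambda\in[0,+\infty]$: $T_0(x,y)=\min\{x,y\}$, $T_1(x,y)=xy$, $T_{+\infty}(x,y)=\max\{x+y-1,0\}$,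 and $T_\lambda(x,y)=\log_\lambda\big(1+\frac{(\lambda^x-1)(\lambda^y-1)}{\lambda-1}\big)$ otherwise. $T_\lambda(A|H,B|K)$ denotes the random quantity obtained by applying $T_\lambda$ pointwise to the values of $A|H$ and $B|K$. *)

theory Defs
  imports Complex_Main "HOL-Library.Extended_Real"
begin

text \<open>Possible worlds are elements of a type 'w; events are sets of worlds, identified
with their indicators.\<close>

definition ind :: "'w set \<Rightarrow> 'w \<Rightarrow> real" where
  "ind E w = (if w \<in> E then 1 else 0)"

text \<open>Conditional event E|H with P(E|H)=x, as random quantity EH + x(not H).\<close>
definition cond_event :: "'w set \<Rightarrow> 'w set \<Rightarrow> real \<Rightarrow> 'w \<Rightarrow> real" where
  "cond_event E H x w = ind (E \<inter> H) w + x * ind (- H) w"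

definition coherent :: "(('w \<Rightarrow> real) \<times> 'w set) list \<Rightarrow> real list \<Rightarrow> bool" where
  "coherent F mu \<longleftrightarrow> length mu = length F \<and>
     (\<forall>s :: nat \<Rightarrow> real.
        let G = (\<lambda>w. \<Sum>i<length F. s i * ind (snd (F ! i)) w * (fst (F ! i) w - mu ! i));
            U = \<Union> (set (map snd F))
        in (\<exists>w\<in>U. G w \<le> 0) \<and> (\<exists>w\<in>U. 0 \<le> G w))"

text \<open>The random quantity AHBK + x(not H)BK + y(not K)AH, whose conditional prevision
given H or K is the prevision z of the conjunction.\<close>
definition conj_num :: "'w set \<Rightarrow> 'w set \<Rightarrow> 'w set \<Rightarrow> 'w set \<Rightarrow> real \<Rightarrow> real \<Rightarrow> 'w \<Rightarrow> real" where
  "conj_num A H B K x y w =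
     ind (A \<inter> H \<inter> B \<inter> K) w + x * ind (- H \<inter> B \<inter> K) w + y * ind (- K \<inter> A \<inter> H) w"

definition conj_ce :: "'w set \<Rightarrow> 'w set \<Rightarrow> 'w set \<Rightarrow> 'w set \<Rightarrow> real \<Rightarrow> real \<Rightarrow> real \<Rightarrow> 'w \<Rightarrow> real" where
  "conj_ce A H B K x y z w = conj_num A H B K x y w + z * ind (- H \<inter> - K) w"

definition frank :: "ereal \<Rightarrow> real \<Rightarrow> real \<Rightarrow> real" where
  "frank l u v =
     (if l = 0 then min u v
      else if l = 1 then u * v
      else if l = \<infinity> then max (u + v - 1) 0
      else (let r = real_of_ereal l in
            log r (1 + (r powr u - 1) * (r powr v - 1) / (r - 1))))"

end

theory Submission
  imports Defs "HOL-Real_Asymp.Real_Asymp"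
begin

text \<open>
  On the worlds of \<open>H \<or> K\<close> at least one of the two conditional events is 0 or 1, and there
  every t-norm reduces to the product, which is the value of the conjunction; on the remaining
  worlds the conjunction is the constant z.  So it suffices to find a Frank t-norm with
  \<open>T\<^sub>\<lambda>(x, y) = z\<close>.  Coherence confines z to the Frechet-Hoeffding bounds
  \<open>max (x + y - 1) 0 \<le> z \<le> min x y\<close>, and as \<lambda> runs through \<open>]0, 1[\<close> and
  \<open>]1, \<infinity>[\<close> the values \<open>T\<^sub>\<lambda>(x, y)\<close> fill these bounds continuously,
  approaching min, product and Lukasiewicz at \<lambda> = 0, 1, \<infinity>.
\<close>

lemma tendsto_IVT:
  fixes f :: "real \<Rightarrow> real"
  assumes "connected S" "continuous_on S f"
    and "F \<noteq> bot" "eventually (\<lambda>r. r \<in> S) F" "(f \<longlongrightarrow> p) F"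
    and "G \<noteq> bot" "eventually (\<lambda>r. r \<in> S) G" "(f \<longlongrightarrow> q) G"
    and "q < z" "z < p"
  shows "\<exists>r\<in>S. f r = z"
proof -
  obtain r1 where r1: "r1 \<in> S" "z < f r1"
    using eventually_happens'[OF assms(3) eventually_conj[OF assms(4) order_tendstoD(1)[OF assms(5,10)]]]
    by blast
  obtain r2 where r2: "r2 \<in> S" "f r2 < z"
    using eventually_happens'[OF assms(6) eventually_conj[OF assms(7) order_tendstoD(2)[OF assms(8,9)]]]
    by blast
  have "z \<in> f ` S"
    using connectedD_interval[OF connected_continuous_image[OF assms(2,1)], of "f r2" "f r1" z] r1 r2
    by (simp add: less_imp_le)
  then show ?thesis by blast
qed

subsection \<open>Frank t-norms with a real parameter\<close>

definition frank_real :: "real \<Rightarrow> real \<Rightarrow> real \<Rightarrow> real" where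
  "frank_real u v r = log r (1 + (r powr u - 1) * (r powr v - 1) / (r - 1))"

lemma frank_ereal: "0 < r \<Longrightarrow> r \<noteq> 1 \<Longrightarrow> frank (ereal r) u v = frank_real u v r"
  by (simp add: frank_def frank_real_def one_ereal_def zero_ereal_def)

lemma frank_real_commute: "frank_real u v r = frank_real v u r"
  by (simp add: frank_real_def mult.commute)

lemma frank_real_tendsto_product_at_right_1:
  "0 < u \<Longrightarrow> u < 1 \<Longrightarrow> 0 < v \<Longrightarrow> v < 1 \<Longrightarrow> (frank_real u v \<longlongrightarrow> u * v) (at_right 1)"
  unfolding frank_real_def by real_asymp

lemma frank_real_tendsto_product_at_left_1:
  "0 < u \<Longrightarrow> u < 1 \<Longrightarrow> 0 < v \<Longrightarrow> v < 1 \<Longrightarrow> (frank_real u v \<longlongrightarrow> u * v) (at_left 1)"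
  unfolding frank_real_def by real_asymp

lemma frank_real_tendsto_min_at_right_0:
  assumes "0 < u" "u < 1" "0 < v" "v < 1"
  shows "(frank_real u v \<longlongrightarrow> min u v) (at_right 0)"
proof -
  have lt: "(frank_real a b \<longlongrightarrow> a) (at_right 0)" if "0 < a" "a < b" "b < 1" for a b
    using that unfolding frank_real_def by real_asymp
  have eq: "(frank_real u u \<longlongrightarrow> u) (at_right 0)"
    using assms unfolding frank_real_def by real_asymp
  consider "u < v" | "u = v" | "v < u" by linarith
  then show ?thesis
  proof cases
    case 3
    have "frank_real u v = frank_real v u" by (rule ext) (rule frank_real_commute)
    then show ?thesis using assms 3 lt[of v u] by (simp add: min_def)
  qed (use assms lt eq in \<open>auto simp: min_def\<close>)
qed

lemma frank_real_tendsto_lukasiewicz_at_top: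
  assumes "0 < u" "u < 1" "0 < v" "v < 1"
  shows "(frank_real u v \<longlongrightarrow> max (u + v - 1) 0) at_top"
proof -
  have lt: "(frank_real u v \<longlongrightarrow> 0) at_top" if "u + v < 1"
    using assms that unfolding frank_real_def by real_asymp
  have eq: "(frank_real u (1 - u) \<longlongrightarrow> 0) at_top"
    using assms unfolding frank_real_def by real_asymp
  have gt: "(frank_real u v \<longlongrightarrow> u + v - 1) at_top" if "u + v > 1"
    using assms that unfolding frank_real_def by real_asymp
  consider "u + v < 1" | "v = 1 - u" | "u + v > 1" by linarith
  then show ?thesis using lt eq gt by cases (auto simp: max_def)
qed

lemma frank_real_arg_pos:
  fixes u v r :: real
  assumes "0 < u" "u < 1" "0 < v" "v < 1" "0 < r" "r \<noteq> 1"
  shows "0 < 1 + (r powr u - 1) * (r powr v - 1) / (r - 1)"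
proof (cases "r > 1")
  case True
  then have "r powr u > 1" "r powr v > 1" using assms by (auto intro: gr_one_powr)
  then show ?thesis using True by (simp add: add_pos_nonneg)
next
  case False
  then have r: "0 < r" "r < 1" using assms by auto
  have "r powr 1 < r powr u" "r powr v < r powr 0" "r powr u < r powr 0"
    using assms r by (intro powr_less_mono'; simp)+
  then have "0 \<le> 1 - r powr u" "1 - r powr v \<le> 1" "1 - r powr u < 1 - r"
    using r by simp_all
  then have "(1 - r powr u) * (1 - r powr v) < 1 - r"
    using mult_left_le[of "1 - r powr v" "1 - r powr u"] by linarith
  then show ?thesis using r by (simp add: field_simps)
qed

lemma continuous_on_frank_real:
  assumes "0 < u" "u < 1" "0 < v" "v < 1" "S \<subseteq> {0<..} - {1}"
  shows "continuous_on S (frank_real u v)"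
  unfolding frank_real_def
proof (rule continuous_on_log[OF continuous_on_id])
  show "\<forall>r\<in>S. 0 < r" "\<forall>r\<in>S. r \<noteq> 1" using assms(5) by auto
  then show "continuous_on S (\<lambda>r. 1 + (r powr u - 1) * (r powr v - 1) / (r - 1))"
    by (intro continuous_intros) auto
  show "\<forall>r\<in>S. 1 + (r powr u - 1) * (r powr v - 1) / (r - 1) \<noteq> 0"
    using assms(5) frank_real_arg_pos[OF assms(1-4)] by (metis less_irrefl Diff_iff greaterThan_iff singletonI subsetD)
qed

lemma frank_real_surj:
  assumes uv: "0 < u" "u < 1" "0 < v" "v < 1"
    and "max (u + v - 1) 0 < z" "z < min u v" "z \<noteq> u * v"
  shows "\<exists>r>0. r \<noteq> 1 \<and> frank_real u v r = z"
proof (cases "z < u * v")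
  case True
  have "continuous_on {1<..} (frank_real u v)"
    using uv by (intro continuous_on_frank_real) auto
  moreover have "eventually (\<lambda>r. r \<in> {1<..}) (at_right (1::real))"
    using eventually_at_right_less[of 1] by simp
  ultimately obtain r where r: "r \<in> {1<..}" "frank_real u v r = z"
    using tendsto_IVT[OF connected_Ioi[of 1] _ _ _ frank_real_tendsto_product_at_right_1[OF uv]
          _ _ frank_real_tendsto_lukasiewicz_at_top[OF uv] assms(5) True]
      eventually_gt_at_top[of 1] by auto
  then show ?thesis by (intro exI[of _ r]) auto
next
  case False
  then have "u * v < z" using assms(7) by simp
  have "continuous_on {0<..<1} (frank_real u v)"
    using uv by (intro continuous_on_frank_real) auto
  then obtain r where r: "r \<in> {0<..<1}" "frank_real u v r = z"
    using tendsto_IVT[OF connected_Ioo[of 0 1] _ _ _ frank_real_tendsto_min_at_right_0[OF uv]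
          _ _ frank_real_tendsto_product_at_left_1[OF uv] \<open>u * v < z\<close> assms(6)]
      eventually_at_right_real[of 0 1] eventually_at_left_real[of 0 1] by auto
  then show ?thesis by (intro exI[of _ r]) auto
qed

lemma frank_surj:
  assumes "0 \<le> u" "u \<le> 1" "0 \<le> v" "v \<le> 1" "max (u + v - 1) 0 \<le> z" "z \<le> min u v"
  shows "\<exists>l::ereal. 0 \<le> l \<and> frank l u v = z"
proof -
  consider "z = min u v" | "z = max (u + v - 1) 0" | "z = u * v"
    | "max (u + v - 1) 0 < z" "z < min u v" "z \<noteq> u * v" using assms by linarith
  then show ?thesis
  proof cases
    case 1 then show ?thesis by (intro exI[of _ 0]) (simp add: frank_def)
  next
    case 2 then show ?thesis by (intro exI[of _ \<infinity>]) (simp add: frank_def)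
  next
    case 3 then show ?thesis by (intro exI[of _ 1]) (simp add: frank_def)
  next
    case 4
    then have "0 < u" "u < 1" "0 < v" "v < 1" using assms by (auto simp: min_def max_def split: if_splits)
    with 4 obtain r where "0 < r" "r \<noteq> 1" "frank_real u v r = z"
      using frank_real_surj by blast
    then show ?thesis by (intro exI[of _ "ereal r"]) (simp add: frank_ereal)
  qed
qed

lemma frank_boundary:
  fixes l :: ereal
  assumes "0 \<le> l" "0 \<le> u" "u \<le> 1" "0 \<le> v" "v \<le> 1" "u \<in> {0, 1} \<or> v \<in> {0, 1}"
  shows "frank l u v = u * v"
proof (cases l)
  case (real r)
  show ?thesis
  proof (cases "r = 0 \<or> r = 1")
    case False
    then have "frank l u v = frank_real u v r" using real assms(1) by (simp add: frank_ereal)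
    also have "\<dots> = u * v" using assms(6) real False assms(1) by (auto simp: frank_real_def)
    finally show ?thesis .
  qed (use real assms in \<open>auto simp: frank_def zero_ereal_def one_ereal_def\<close>)
qed (use assms in \<open>auto simp: frank_def\<close>)

subsection \<open>Coherence of the assessment on the conjunction\<close>

definition conj_gain ::
    "'w set \<Rightarrow> 'w set \<Rightarrow> 'w set \<Rightarrow> 'w set \<Rightarrow> real \<Rightarrow> real \<Rightarrow> real \<Rightarrow> real \<Rightarrow> real \<Rightarrow> real \<Rightarrow> 'w \<Rightarrow> real"
  where
  "conj_gain A H B K x y z s1 s2 s3 w = s1 * ind H w * (ind A w - x) + s2 * ind K w * (ind B w - y)
     + s3 * ind (H \<union> K) w * (conj_num A H B K x y w - z)"

definition coherent_conj :: "'w set \<Rightarrow> 'w set \<Rightarrow> 'w set \<Rightarrow> 'w set \<Rightarrow> real \<Rightarrow> real \<Rightarrow> real \<Rightarrow> bool" where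
  "coherent_conj A H B K x y z \<longleftrightarrow> (\<forall>s1 s2 s3.
     (\<exists>w\<in>H \<union> K. conj_gain A H B K x y z s1 s2 s3 w \<le> 0) \<and>
     (\<exists>w\<in>H \<union> K. 0 \<le> conj_gain A H B K x y z s1 s2 s3 w))"

lemma coherent_imp_coherent_conj:
  assumes "coherent [(ind A, H), (ind B, K), (conj_num A H B K x y, H \<union> K)] [x, y, z]"
  shows "coherent_conj A H B K x y z"
  unfolding coherent_conj_def
proof (intro allI)
  fix s1 s2 s3
  from assms[unfolded coherent_def, THEN conjunct2,
      THEN spec[of _ "\<lambda>i. if i = 0 then s1 else if i = 1 then s2 else s3"]]
  show "(\<exists>w\<in>H \<union> K. conj_gain A H B K x y z s1 s2 s3 w \<le> 0) \<and>
        (\<exists>w\<in>H \<union> K. 0 \<le> conj_gain A H B K x y z s1 s2 s3 w)"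
    by (simp add: Let_def numeral_3_eq_3 lessThan_Suc conj_gain_def Un_ac add_ac)
qed

lemma coherent_conj_commute:
  assumes "coherent_conj A H B K x y z"
  shows "coherent_conj B K A H y x z"
proof -
  have "conj_gain B K A H y x z s1 s2 s3 w = conj_gain A H B K x y z s2 s1 s3 w" for s1 s2 s3 w
    by (simp add: conj_gain_def conj_num_def ind_def Int_ac Un_commute)
  then show ?thesis using assms by (simp add: coherent_conj_def Un_commute)
qed

lemma stake_beyond_unit_interval:
  fixes x c :: real
  assumes "x \<notin> {0..1}"
  obtains s where "\<And>a. a \<in> {0, 1} \<Longrightarrow> c \<le> s * (a - x)"
proof (cases "x < 0")
  case True
  define s where "s = \<bar>c\<bar> / - x"
  have "c \<le> s * (a - x)" if "a \<in> {0, 1}" for a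
  proof -
    have "c \<le> s * - x" using True by (simp add: s_def)
    also have "\<dots> \<le> s * (a - x)"
      using True that by (intro mult_left_mono) (auto simp: s_def divide_nonneg_neg)
    finally show ?thesis .
  qed
  then show ?thesis using that by blast
next
  case False
  then have x: "1 < x" using assms by auto
  define s where "s = \<bar>c\<bar> / (1 - x)"
  have "c \<le> s * (a - x)" if "a \<in> {0, 1}" for a
  proof -
    have "c \<le> s * (1 - x)" using x by (simp add: s_def)
    also have "\<dots> \<le> s * (a - x)"
      using x that by (intro mult_left_mono_neg) (auto simp: s_def divide_nonneg_neg)
    finally show ?thesis .
  qed
  then show ?thesis using that by blast
qed

text \<open>
  Betting \<open>s2 = - x s3\<close> on \<open>B|K\<close> makes the gain constant on \<open>K - H\<close>
  (where the conjunction is \<open>x B\<close>), and a large stake on \<open>A|H\<close> dominates the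
  bounded rest of the gain on H.
\<close>

lemma coherent_conj_prevision_range:
  assumes "coherent_conj A H B K x y z" "z \<noteq> x * y"
  shows "0 \<le> x" "x \<le> 1"
proof -
  have "x \<in> {0..1}"
  proof (rule ccontr)
    assume x: "x \<notin> {0..1}"
    define s3 where "s3 = 1 / (x * y - z)"
    define s2 where "s2 = - x * s3"
    define C where "C = \<bar>s2\<bar> * (1 + \<bar>y\<bar>) + \<bar>s3\<bar> * (1 + \<bar>x\<bar> + \<bar>y\<bar> + \<bar>z\<bar>)"
    obtain s1 where s1: "\<And>a. a \<in> {0, 1} \<Longrightarrow> C + 1 \<le> s1 * (a - x)"
      using stake_beyond_unit_interval[OF x] by blast
    have "0 < conj_gain A H B K x y z s1 s2 s3 w" if "w \<in> H \<union> K" for w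
    proof (cases "w \<in> H")
      case False
      then have "conj_gain A H B K x y z s1 s2 s3 w = s3 * (x * y - z)"
        using that by (auto simp: conj_gain_def conj_num_def ind_def s2_def algebra_simps)
      then show ?thesis using assms(2) by (simp add: s3_def)
    next
      case True
      define R where "R = s2 * ind K w * (ind B w - y) + s3 * (conj_num A H B K x y w - z)"
      have "\<bar>ind K w * (ind B w - y)\<bar> \<le> 1 + \<bar>y\<bar>"
        "\<bar>conj_num A H B K x y w - z\<bar> \<le> 1 + \<bar>x\<bar> + \<bar>y\<bar> + \<bar>z\<bar>"
        by (auto simp: conj_num_def ind_def)
      then have "\<bar>R\<bar> \<le> \<bar>s2\<bar> * (1 + \<bar>y\<bar>) + \<bar>s3\<bar> * (1 + \<bar>x\<bar> + \<bar>y\<bar> + \<bar>z\<bar>)"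
        unfolding R_def
        by (intro order_trans[OF abs_triangle_ineq] add_mono)
           (simp_all add: abs_mult mult.assoc mult_left_mono)
      then have "\<bar>R\<bar> \<le> C" by (simp add: C_def)
      moreover have "C + 1 \<le> s1 * (ind A w - x)" by (rule s1) (simp add: ind_def)
      moreover have "conj_gain A H B K x y z s1 s2 s3 w = s1 * (ind A w - x) + R"
        using True by (simp add: conj_gain_def R_def ind_def)
      ultimately show ?thesis by linarith
    qed
    moreover obtain w where "w \<in> H \<union> K" "conj_gain A H B K x y z s1 s2 s3 w \<le> 0"
      using assms(1) unfolding coherent_conj_def by blast
    ultimately show False by force
  qed
  then show "0 \<le> x" "x \<le> 1" by auto
qed

lemma coherent_conj_le_prevision:
  assumes "coherent_conj A H B K x y z" "0 \<le> x" "y \<le> 1"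
  shows "z \<le> x"
proof -
  obtain w where "w \<in> H \<union> K" "0 \<le> conj_gain A H B K x y z (-1) 0 1 w"
    using assms(1) unfolding coherent_conj_def by blast
  then show ?thesis using assms by (auto simp: conj_gain_def conj_num_def ind_def split: if_splits)
qed

lemma coherent_conj_nonneg:
  assumes "coherent_conj A H B K x y z" "0 \<le> x" "0 \<le> y"
  shows "0 \<le> z"
proof -
  obtain w where "w \<in> H \<union> K" "conj_gain A H B K x y z 0 0 1 w \<le> 0"
    using assms(1) unfolding coherent_conj_def by blast
  then show ?thesis using assms by (auto simp: conj_gain_def conj_num_def ind_def split: if_splits)
qed

lemma coherent_conj_ge_lukasiewicz:
  assumes "coherent_conj A H B K x y z" "x \<le> 1" "y \<le> 1"
  shows "x + y - 1 \<le> z"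
proof -
  obtain w where "w \<in> H \<union> K" "0 \<le> conj_gain A H B K x y z 1 1 (-1) w"
    using assms(1) unfolding coherent_conj_def by blast
  then show ?thesis using assms by (auto simp: conj_gain_def conj_num_def ind_def split: if_splits)
qed

subsection \<open>The conjunction as a t-norm\<close>

lemma conj_ce_eq_tnorm:
  fixes T :: "real \<Rightarrow> real \<Rightarrow> real"
  assumes "\<And>u v. u \<in> {0, 1, x} \<Longrightarrow> v \<in> {0, 1, y} \<Longrightarrow> u \<in> {0, 1} \<or> v \<in> {0, 1} \<Longrightarrow> T u v = u * v"
    and "T x y = z"
  shows "conj_ce A H B K x y z w = T (cond_event A H x w) (cond_event B K y w)"
proof (cases "w \<in> H \<union> K")
  case True
  then have "cond_event A H x w \<in> {0, 1} \<or> cond_event B K y w \<in> {0, 1}"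
    "cond_event A H x w \<in> {0, 1, x}" "cond_event B K y w \<in> {0, 1, y}"
    by (auto simp: cond_event_def ind_def)
  with assms(1) have "T (cond_event A H x w) (cond_event B K y w) = cond_event A H x w * cond_event B K y w"
    by blast
  with True show ?thesis by (auto simp: conj_ce_def conj_num_def cond_event_def ind_def)
qed (use assms(2) in \<open>auto simp: conj_ce_def conj_num_def cond_event_def ind_def\<close>)

theorem theorem15:
  fixes A B H K :: "'w set" and x y z :: real
  assumes "H \<noteq> {}" and "K \<noteq> {}"
    and "coherent [(ind A, H), (ind B, K), (conj_num A H B K x y, H \<union> K)] [x, y, z]"
  shows "\<exists>l :: ereal. 0 \<le> l \<and>
    (\<forall>w. conj_ce A H B K x y z w = frank l (cond_event A H x w) (cond_event B K y w))"
proof (cases "z = x * y")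
  case True
  \<comment> \<open>the gain is restricted to \<open>H \<or> K\<close>, so coherence need not force \<open>x, y \<in> [0, 1]\<close>;
    the product t-norm works regardless\<close>
  then show ?thesis by (intro exI[of _ 1] conjI allI conj_ce_eq_tnorm) (auto simp: frank_def)
next
  case False
  have P: "coherent_conj A H B K x y z" "coherent_conj B K A H y x z"
    using coherent_imp_coherent_conj[OF assms(3)] coherent_conj_commute by blast+
  have x: "0 \<le> x" "x \<le> 1" using coherent_conj_prevision_range[OF P(1) False] by auto
  have y: "0 \<le> y" "y \<le> 1" using coherent_conj_prevision_range[OF P(2)] False by (auto simp: mult.commute)
  have "z \<le> min x y" "max (x + y - 1) 0 \<le> z"
    using coherent_conj_le_prevision coherent_conj_nonneg coherent_conj_ge_lukasiewicz P x y
    by (auto simp: min_def max_def)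
  then obtain l where l: "0 \<le> l" "frank l x y = z"
    using frank_surj x y by blast
  have "frank l u v = u * v" if "u \<in> {0, 1, x}" "v \<in> {0, 1, y}" "u \<in> {0, 1} \<or> v \<in> {0, 1}" for u v
    using frank_boundary[OF l(1)] that x y by auto
  then show ?thesis using l by (intro exI[of _ l] conjI allI conj_ce_eq_tnorm) auto
qed

end
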